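(* Let $k > k' > 0$. There exists a $k$-local function $f:\{0,1\}^n\to\mathbb{R}$ with $\max_{x\in\{0,1\}^n}|f(x)| \le 1$ such that for every $k'$-local function $g:\{0,1\}^n\to\mathbb{R}$, $$\max_{x\in\{0,1\}^n}|f(x) - g(x)| \ge 2^{-k'}.$$
   Context: A function $f:\{0,1\}^n\to\mathbb{R}$ is $k$-local if it can be written as a sum $f = \sum_i f_i$ of functions $f_i:\{0,1\}^n\to\mathbb{R}$ each depending on at most $k$ of its inputs. *)

theory Defs
  imports Complex_Main
begin

text \<open>The Boolean cube {0,1}^n, represented as bit-vectors x :: nat => bool
  with x i = False for all i >= n (coordinates are 0..n-1).\<close>
definition cube :: "nat \<Rightarrow> (nat \<Rightarrow> bool) set" where
  "cube n = {x. \<forall>i\<ge>n. \<not> x i}"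

definition depends_only_on :: "nat \<Rightarrow> nat set \<Rightarrow> ((nat \<Rightarrow> bool) \<Rightarrow> real) \<Rightarrow> bool" where
  "depends_only_on n S h \<longleftrightarrow>
     (\<forall>x\<in>cube n. \<forall>y\<in>cube n. (\<forall>i\<in>S. x i = y i) \<longrightarrow> h x = h y)"

definition k_local :: "nat \<Rightarrow> nat \<Rightarrow> ((nat \<Rightarrow> bool) \<Rightarrow> real) \<Rightarrow> bool" where
  "k_local n k f \<longleftrightarrow>
     (\<exists>m (fs :: nat \<Rightarrow> (nat \<Rightarrow> bool) \<Rightarrow> real) (Ss :: nat \<Rightarrow> nat set).
        (\<forall>j<m. Ss j \<subseteq> {..<n} \<and> card (Ss j) \<le> k \<and> depends_only_on n (Ss j) (fs j)) \<and>
        (\<forall>x\<in>cube n. f x = (\<Sum>j<m. fs j x)))"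

end

theory Submission
  imports Defs
begin

text \<open>The parity function on the first \<open>m\<close> coordinates is orthogonal on the cube \<open>{0,1}\<^sup>m\<close> to
  every function depending on fewer than \<open>m\<close> coordinates: flipping a coordinate the function
  ignores negates the parity. Hence it is orthogonal to every \<open>k'\<close>-local \<open>g\<close> when \<open>k' < m\<close>.
  If \<open>g\<close> were within distance less than \<open>1\<close> of the \<open>\<plusminus>1\<close>-valued parity everywhere, it would
  have the sign of the parity everywhere and their correlation would be positive. So for
  \<open>m = k' + 1\<close> the distance is even at least \<open>1 \<ge> 2\<^sup>-\<^sup>k\<^sup>'\<close>.\<close>

lemma finite_cube: "finite (cube n)"
proof -
  have "inj_on (\<lambda>x. {i. x i}) (cube n)"
    by (rule inj_onI) (auto simp: set_eq_iff)
  moreover have "(\<lambda>x. {i. x i}) ` cube n \<subseteq> Pow {..<n}"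
    by (auto simp: cube_def) (meson not_le)
  ultimately show ?thesis
    by (meson finite_Pow_iff finite_imageD finite_lessThan finite_subset)
qed

lemma cube_mono: "m \<le> n \<Longrightarrow> cube m \<subseteq> cube n"
  by (auto simp: cube_def)

definition parity :: "nat \<Rightarrow> (nat \<Rightarrow> bool) \<Rightarrow> real" where
  "parity m x = (-1) ^ card {j. j < m \<and> x j}"

lemma abs_parity [simp]: "\<bar>parity m x\<bar> = 1"
  by (simp add: parity_def)

lemma parity_flip:
  assumes "i < m"
  shows "parity m (x(i := \<not> x i)) = - parity m x"
proof -
  have "{j. j < m \<and> (x(i := True)) j} = insert i {j. j < m \<and> (x(i := False)) j}"
    using assms by auto
  then have set_true: "parity m (x(i := True)) = - parity m (x(i := False))"
    by (simp add: parity_def)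
  show ?thesis
  proof (cases "x i")
    case True
    then have "x(i := True) = x" by (intro ext) simp
    with True set_true show ?thesis by simp
  next
    case False
    then have "x(i := False) = x" by (intro ext) simp
    with False set_true show ?thesis by simp
  qed
qed

lemma depends_only_on_parity: "depends_only_on n {..<m} (parity m)"
  unfolding depends_only_on_def
proof (intro ballI impI)
  fix x y :: "nat \<Rightarrow> bool"
  assume "\<forall>i\<in>{..<m}. x i = y i"
  then have "{j. j < m \<and> x j} = {j. j < m \<and> y j}"
    by auto
  then show "parity m x = parity m y"
    by (simp add: parity_def)
qed

lemma k_local_parity:
  assumes "m \<le> k" and "m \<le> n"
  shows "k_local n k (parity m)"
  unfolding k_local_def
  using assms depends_only_on_parity
  by (intro exI[of _ 1] exI[of _ "\<lambda>_. parity m"] exI[of _ "\<lambda>_. {..<m}"]) auto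

lemma sum_parity_mult_eq_0:
  assumes "i < m" and "i \<notin> T" and "m \<le> n" and h: "depends_only_on n T h"
  shows "(\<Sum>x\<in>cube m. parity m x * h x) = 0"
proof -
  define flip where "flip x = x(i := \<not> x i)" for x :: "nat \<Rightarrow> bool"
  let ?F = "\<lambda>x. parity m x * h x"
  have flip_flip: "flip (flip x) = x" for x
    by (auto simp: flip_def)
  have flip_cube: "flip x \<in> cube m" if "x \<in> cube m" for x
    using that \<open>i < m\<close> by (auto simp: flip_def cube_def)
  have F_flip: "?F (flip x) = - ?F x" if "x \<in> cube m" for x
  proof -
    have "flip x \<in> cube n" and "x \<in> cube n"
      using flip_cube[OF that] that cube_mono[OF \<open>m \<le> n\<close>] by blast+
    moreover have "\<forall>j\<in>T. flip x j = x j"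
      using \<open>i \<notin> T\<close> by (auto simp: flip_def)
    ultimately have "h (flip x) = h x"
      using h unfolding depends_only_on_def by blast
    then show ?thesis
      using parity_flip[OF \<open>i < m\<close>] by (simp add: flip_def)
  qed
  have "sum ?F (cube m) = sum (?F \<circ> flip) (cube m)"
    by (rule sum.reindex_bij_witness[of _ flip flip]) (auto simp: flip_flip flip_cube)
  also have "\<dots> = - sum ?F (cube m)"
    by (simp add: F_flip sum_negf)
  finally show ?thesis by simp
qed

lemma sum_parity_mult_k_local_eq_0:
  assumes "k < m" and "m \<le> n" and "k_local n k g"
  shows "(\<Sum>x\<in>cube m. parity m x * g x) = 0"
proof -
  obtain l :: nat and fs Ss
    where terms: "\<forall>j<l. Ss j \<subseteq> {..<n} \<and> card (Ss j) \<le> k \<and> depends_only_on n (Ss j) (fs j)"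
      and g: "\<forall>x\<in>cube n. g x = (\<Sum>j<l. fs j x)"
    using \<open>k_local n k g\<close> unfolding k_local_def by blast
  have term_orthogonal: "(\<Sum>x\<in>cube m. parity m x * fs j x) = 0" if "j < l" for j
  proof -
    have "finite (Ss j)" "card (Ss j) < m"
      using terms that \<open>k < m\<close> finite_subset by fastforce+
    then obtain i where "i < m" "i \<notin> Ss j"
      by (metis card_lessThan card_mono lessThan_iff not_le subsetI)
    then show ?thesis
      using sum_parity_mult_eq_0 \<open>m \<le> n\<close> terms that by blast
  qed
  have "(\<Sum>x\<in>cube m. parity m x * g x) = (\<Sum>x\<in>cube m. \<Sum>j<l. parity m x * fs j x)"
    using g cube_mono[OF \<open>m \<le> n\<close>] by (auto intro!: sum.cong simp: sum_distrib_left)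
  also have "\<dots> = (\<Sum>j<l. \<Sum>x\<in>cube m. parity m x * fs j x)"
    by (rule sum.swap)
  also have "\<dots> = 0"
    by (simp add: term_orthogonal)
  finally show ?thesis .
qed

lemma k_local_far_from_parity:
  assumes "k < m" and "m \<le> n" and "k_local n k g"
  shows "\<exists>x\<in>cube n. \<bar>parity m x - g x\<bar> \<ge> 1"
proof (rule ccontr)
  assume far: "\<not> (\<exists>x\<in>cube n. \<bar>parity m x - g x\<bar> \<ge> 1)"
  have same_sign: "parity m x * g x > 0" if "x \<in> cube m" for x
  proof -
    have "x \<in> cube n"
      using that cube_mono[OF \<open>m \<le> n\<close>] by blast
    then have close: "\<bar>parity m x - g x\<bar> < 1"
      using far by (simp add: not_le)
    have "parity m x = 1 \<or> parity m x = -1"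
      using abs_parity[of m x] by (auto simp: abs_if split: if_splits)
    then show ?thesis
      using close by (auto simp: abs_less_iff)
  qed
  have "(\<lambda>_. False) \<in> cube m"
    by (simp add: cube_def)
  then have "(\<Sum>x\<in>cube m. parity m x * g x) > 0"
    by (intro sum_pos finite_cube same_sign) auto
  then show False
    using sum_parity_mult_k_local_eq_0[OF assms] by simp
qed

theorem lemma12:
  fixes n k k' :: nat
  assumes "0 < k'" and "k' < k" and "k \<le> n"
  shows "\<exists>f. k_local n k f \<and> (\<forall>x\<in>cube n. \<bar>f x\<bar> \<le> 1) \<and>
           (\<forall>g. k_local n k' g \<longrightarrow> (\<exists>x\<in>cube n. \<bar>f x - g x\<bar> \<ge> 1 / 2 ^ k'))"
proof (intro exI conjI allI impI)
  have "Suc k' \<le> k" and "Suc k' \<le> n"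
    using assms by simp_all
  then show "k_local n k (parity (Suc k'))"
    by (rule k_local_parity)
  show "\<forall>x\<in>cube n. \<bar>parity (Suc k') x\<bar> \<le> 1"
    by simp
  fix g
  assume "k_local n k' g"
  then obtain x where "x \<in> cube n" and "\<bar>parity (Suc k') x - g x\<bar> \<ge> 1"
    using k_local_far_from_parity[OF lessI \<open>Suc k' \<le> n\<close>] by blast
  moreover have "1 / 2 ^ k' \<le> (1::real)"
    by simp
  ultimately show "\<exists>x\<in>cube n. \<bar>parity (Suc k') x - g x\<bar> \<ge> 1 / 2 ^ k'"
    by (meson order_trans)
qed

end
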